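(* Let $m,k$ be positive integers and let $\mu_1,\dots,\mu_k\in\{0,1\}^m$ be random vectors whose entries are independent fair coin flips. Let $\beta=m/(k2^k)$. Then, with probability at least $1-2^{(1-\beta)k}$, the following non-degeneracy condition holds: whenever $\tau\in\{0,1\}^m$ has the property that for all $x,y,z\in\{1,\dots,m\}$ there exists some $i$ with $\tau(x)=\mu_i(x)$, $\tau(y)=\mu_i(y)$ and $\tau(z)=\mu_i(z)$, then $\tau=\mu_j$ for some $j\in\{1,\dots,k\}$. *)

theory Defs
  imports "HOL-Probability.Probability"
begin

text \<open>Binary vectors in {0,1}^m are modelled as extensional functions
  {1..m} \<rightarrow> bool (True = 1). Independent fair coin flips for all entries
  means the uniform distribution on the (finite) set of all such tuples.\<close>

definition bin_vectors :: "nat \<Rightarrow> (nat \<Rightarrow> bool) set" where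
  "bin_vectors m = {1..m} \<rightarrow>\<^sub>E (UNIV :: bool set)"

definition vector_tuples :: "nat \<Rightarrow> nat \<Rightarrow> (nat \<Rightarrow> nat \<Rightarrow> bool) set" where
  "vector_tuples m k = {1..k} \<rightarrow>\<^sub>E bin_vectors m"

definition nondegenerate :: "nat \<Rightarrow> nat \<Rightarrow> (nat \<Rightarrow> nat \<Rightarrow> bool) \<Rightarrow> bool" where
  "nondegenerate m k \<mu> \<longleftrightarrow>
     (\<forall>\<tau> \<in> bin_vectors m.
        (\<forall>x\<in>{1..m}. \<forall>y\<in>{1..m}. \<forall>z\<in>{1..m}.
           \<exists>i\<in>{1..k}. \<tau> x = \<mu> i x \<and> \<tau> y = \<mu> i y \<and> \<tau> z = \<mu> i z)
        \<longrightarrow> (\<exists>j\<in>{1..k}. \<tau> = \<mu> j))"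

end

theory Submission
  imports Defs
begin

text \<open>Suppose each of the 2^k vectors of {0,1}^k occurs as a column of the k \<times> m matrix with
  rows \<mu> 1, ..., \<mu> k. Given \<tau> with the triple property, let S x be the set of rows agreeing with
  \<tau> in column x. Any three S x intersect, and for each A \<subseteq> {1..k} the column with pattern A gives
  S x = A or S x = {1..k} - A. Take S x of least size and j \<in> S x; then S x - {j}, being smaller,
  is not among the S y, so its complement is, and it meets S x only in j. Hence j lies in every
  S y, i.e. \<tau> = \<mu> j.

  A fixed column is missing with probability (1 - 2^-k)^m \<le> 2^(-m/2^k), so by the union bound over
  the 2^k columns some column is missing with probability at most 2^(k - m/2^k) = 2^((1-\<beta>)k).\<close>

lemma triple_intersecting_family_common_element:
  assumes "finite K" and F: "F \<subseteq> Pow K"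
    and halves: "\<And>A. A \<subseteq> K \<Longrightarrow> A \<in> F \<or> K - A \<in> F"
    and triples: "\<And>X Y Z. X \<in> F \<Longrightarrow> Y \<in> F \<Longrightarrow> Z \<in> F \<Longrightarrow> X \<inter> Y \<inter> Z \<noteq> {}"
  shows "\<exists>j\<in>K. \<forall>Z\<in>F. j \<in> Z"
proof -
  have "F \<noteq> {}" using halves[of "{}"] by auto
  then obtain X0 where "X0 \<in> F" by blast
  then obtain X where X: "X \<in> F" and least: "\<forall>Y. Y \<in> F \<longrightarrow> card X \<le> card Y"
    using ex_has_least_nat[of "\<lambda>X. X \<in> F" X0 card] by blast
  have "X \<subseteq> K" using X F by blast
  obtain j where j: "j \<in> X" using triples[OF X X X] by blast
  have "card (X - {j}) < card X"
    using j \<open>X \<subseteq> K\<close> \<open>finite K\<close> by (meson card_Diff1_less finite_subset)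
  then have "X - {j} \<notin> F" using least by (meson not_le)
  then have Y: "K - (X - {j}) \<in> F" using halves \<open>X \<subseteq> K\<close> by blast
  have "j \<in> Z" if "Z \<in> F" for Z
    \<comment> \<open>X \<inter> (K - (X - {j})) = {j}\<close>
    using triples[OF X Y that] by blast
  then show ?thesis using j \<open>X \<subseteq> K\<close> by blast
qed

definition matrix_columns :: "nat \<Rightarrow> nat \<Rightarrow> (nat \<Rightarrow> nat \<Rightarrow> bool) \<Rightarrow> (nat \<Rightarrow> bool) set" where
  "matrix_columns m k \<mu> = (\<lambda>x. \<lambda>i\<in>{1..k}. \<mu> i x) ` {1..m}"

lemma nondegenerate_if_all_columns_occur:
  assumes \<mu>: "\<mu> \<in> vector_tuples m k" and all_columns: "bin_vectors k \<subseteq> matrix_columns m k \<mu>"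
  shows "nondegenerate m k \<mu>"
  unfolding nondegenerate_def
proof (intro ballI impI)
  fix \<tau> assume \<tau>: "\<tau> \<in> bin_vectors m"
  assume triple_agreement: "\<forall>x\<in>{1..m}. \<forall>y\<in>{1..m}. \<forall>z\<in>{1..m}.
    \<exists>i\<in>{1..k}. \<tau> x = \<mu> i x \<and> \<tau> y = \<mu> i y \<and> \<tau> z = \<mu> i z"
  define agreeing where "agreeing x = {i \<in> {1..k}. \<tau> x = \<mu> i x}" for x
  have "\<exists>j\<in>{1..k}. \<forall>Z\<in>agreeing ` {1..m}. j \<in> Z"
  proof (rule triple_intersecting_family_common_element)
    fix A assume A: "A \<subseteq> {1..k}"
    have "(\<lambda>i\<in>{1..k}. i \<in> A) \<in> matrix_columns m k \<mu>"
      using all_columns by (auto simp: bin_vectors_def)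
    then obtain x where x: "x \<in> {1..m}" and "\<forall>i\<in>{1..k}. \<mu> i x = (i \<in> A)"
      unfolding matrix_columns_def by (auto simp: fun_eq_iff split: if_splits)
    then have "agreeing x = A \<or> agreeing x = {1..k} - A"
      using A by (auto simp: agreeing_def)
    then show "A \<in> agreeing ` {1..m} \<or> {1..k} - A \<in> agreeing ` {1..m}"
      using x by blast
  next
    fix X Y Z assume "X \<in> agreeing ` {1..m}" "Y \<in> agreeing ` {1..m}" "Z \<in> agreeing ` {1..m}"
    then obtain x y z where "x \<in> {1..m}" "y \<in> {1..m}" "z \<in> {1..m}"
      and "X = agreeing x" "Y = agreeing y" "Z = agreeing z" by blast
    then show "X \<inter> Y \<inter> Z \<noteq> {}"
      using triple_agreement unfolding agreeing_def by blast
  qed (auto simp: agreeing_def)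
  then obtain j where j: "j \<in> {1..k}" and "\<forall>x\<in>{1..m}. \<tau> x = \<mu> j x"
    by (auto simp: agreeing_def)
  moreover have "\<mu> j \<in> bin_vectors m"
    using \<mu> j by (auto simp: vector_tuples_def)
  ultimately have "\<tau> = \<mu> j"
    using \<tau> by (intro PiE_ext[where s="\<lambda>_. UNIV"]) (auto simp: bin_vectors_def)
  then show "\<exists>j\<in>{1..k}. \<tau> = \<mu> j" using j by blast
qed

lemma card_PiE_columns_in:
  assumes "finite J" and C: "C \<subseteq> I \<rightarrow>\<^sub>E B"
  shows "card {f \<in> I \<rightarrow>\<^sub>E (J \<rightarrow>\<^sub>E B). \<forall>j\<in>J. (\<lambda>i\<in>I. f i j) \<in> C} = card C ^ card J"
    (is "card ?F = _")
proof -
  have "bij_betw (\<lambda>g. \<lambda>i\<in>I. \<lambda>j\<in>J. g j i) (J \<rightarrow>\<^sub>E C) ?F"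
  proof (rule bij_betw_byWitness[where f' = "\<lambda>f. \<lambda>j\<in>J. \<lambda>i\<in>I. f i j"]; intro ballI subsetI)
    fix g assume "g \<in> J \<rightarrow>\<^sub>E C"
    then show "(\<lambda>j\<in>J. \<lambda>i\<in>I. (\<lambda>i\<in>I. \<lambda>j\<in>J. g j i) i j) = g"
      using C by (intro PiE_ext[where s="\<lambda>_. I \<rightarrow>\<^sub>E B"])
        (auto cong: restrict_cong simp: subset_iff PiE_iff)
  next
    fix f assume "f \<in> ?F"
    then show "(\<lambda>i\<in>I. \<lambda>j\<in>J. (\<lambda>j\<in>J. \<lambda>i\<in>I. f i j) j i) = f"
      by (intro PiE_ext[where s="\<lambda>_. J \<rightarrow>\<^sub>E B"]) (auto cong: restrict_cong simp: PiE_iff)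
  next
    fix f assume "f \<in> (\<lambda>g. \<lambda>i\<in>I. \<lambda>j\<in>J. g j i) ` (J \<rightarrow>\<^sub>E C)"
    then show "f \<in> ?F"
      using C by (auto cong: restrict_cong simp: subset_iff PiE_iff)
  next
    fix g assume "g \<in> (\<lambda>f. \<lambda>j\<in>J. \<lambda>i\<in>I. f i j) ` ?F"
    then show "g \<in> J \<rightarrow>\<^sub>E C" by auto
  qed
  then show ?thesis
    using assms(1) by (simp add: bij_betw_same_card[symmetric] card_PiE)
qed

lemma card_bin_vectors: "card (bin_vectors m) = 2 ^ m"
  by (simp add: bin_vectors_def card_PiE)

lemma finite_bin_vectors: "finite (bin_vectors m)"
  by (simp add: bin_vectors_def finite_PiE)

lemma finite_vector_tuples: "finite (vector_tuples m k)"
  by (simp add: vector_tuples_def finite_bin_vectors finite_PiE)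

lemma card_vector_tuples: "card (vector_tuples m k) = (2 ^ k) ^ m"
  by (simp add: vector_tuples_def card_PiE card_bin_vectors flip: power_mult mult.commute)

lemma vector_tuples_nonempty: "vector_tuples m k \<noteq> {}"
  using card_vector_tuples[of m k] by auto

lemma prob_column_missing:
  assumes c: "c \<in> bin_vectors k"
  shows "measure_pmf.prob (pmf_of_set (vector_tuples m k)) {\<mu>. c \<notin> matrix_columns m k \<mu>}
           = (1 - 1 / 2 ^ k) ^ m"
proof -
  have "vector_tuples m k \<inter> {\<mu>. c \<notin> matrix_columns m k \<mu>} =
        {\<mu> \<in> {1..k} \<rightarrow>\<^sub>E bin_vectors m. \<forall>x\<in>{1..m}. (\<lambda>i\<in>{1..k}. \<mu> i x) \<in> bin_vectors k - {c}}"
    by (auto simp: vector_tuples_def bin_vectors_def matrix_columns_def)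
  also have "card \<dots> = (2 ^ k - 1) ^ m"
    using c unfolding bin_vectors_def
    by (subst card_PiE_columns_in) (auto simp: card_PiE)
  finally have "real (card (vector_tuples m k \<inter> {\<mu>. c \<notin> matrix_columns m k \<mu>}))
                 = (2 ^ k - 1) ^ m"
    by (simp add: of_nat_diff)
  moreover have "(2 ^ k - 1) / 2 ^ k = (1 - 1 / 2 ^ k :: real)"
    by (simp add: diff_divide_distrib)
  ultimately show ?thesis
    by (simp add: measure_pmf_of_set vector_tuples_nonempty finite_vector_tuples card_vector_tuples
        flip: power_divide)
qed

lemma prob_columns_incomplete_le:
  "measure_pmf.prob (pmf_of_set (vector_tuples m k)) {\<mu>. \<not> bin_vectors k \<subseteq> matrix_columns m k \<mu>}
     \<le> 2 ^ k * (1 - 1 / 2 ^ k) ^ m"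
proof -
  have "{\<mu>. \<not> bin_vectors k \<subseteq> matrix_columns m k \<mu>}
          = (\<Union>c\<in>bin_vectors k. {\<mu>. c \<notin> matrix_columns m k \<mu>})"
    by blast
  also have "measure_pmf.prob (pmf_of_set (vector_tuples m k)) \<dots>
      \<le> (\<Sum>c\<in>bin_vectors k.
            measure_pmf.prob (pmf_of_set (vector_tuples m k)) {\<mu>. c \<notin> matrix_columns m k \<mu>})"
    by (rule measure_pmf.finite_measure_subadditive_finite) (auto simp: finite_bin_vectors)
  also have "\<dots> = 2 ^ k * (1 - 1 / 2 ^ k) ^ m"
    by (simp add: prob_column_missing card_bin_vectors)
  finally show ?thesis .
qed

lemma one_minus_power_le_two_powr:
  fixes t :: real
  assumes "0 \<le> t" and "t \<le> 1"
  shows "(1 - t) ^ n \<le> 2 powr (- (real n * t))"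
proof -
  have "(1 - t) ^ n \<le> exp (- t) ^ n"
    using assms exp_ge_add_one_self[of "- t"] by (intro power_mono) auto
  also have "\<dots> = exp (- (real n * t))"
    by (simp flip: exp_of_nat_mult)
  also have "\<dots> \<le> exp (- (real n * t) * ln 2)"
    using assms ln_2_less_1 by (intro exp_mono) (simp add: mult_left_le)
  also have "\<dots> = 2 powr (- (real n * t))"
    by (simp add: powr_def)
  finally show ?thesis .
qed

theorem proposition1:
  fixes m k :: nat
  assumes "m \<ge> 1" and "k \<ge> 1"
  defines "\<beta> \<equiv> real m / (real k * 2 ^ k)"
  shows "measure_pmf.prob (pmf_of_set (vector_tuples m k)) {\<mu>. nondegenerate m k \<mu>}
           \<ge> 1 - 2 powr ((1 - \<beta>) * real k)"
proof -
  let ?P = "measure_pmf.prob (pmf_of_set (vector_tuples m k))"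
  have exponent: "(1 - \<beta>) * real k = real k - real m * (1 / 2 ^ k)"
    using \<open>k \<ge> 1\<close> by (simp add: \<beta>_def field_simps)
  have "2 ^ k * (1 - 1 / 2 ^ k) ^ m \<le> (2::real) ^ k * 2 powr (- (real m * (1 / 2 ^ k)))"
    by (intro mult_left_mono one_minus_power_le_two_powr) auto
  also have "\<dots> = 2 powr ((1 - \<beta>) * real k)"
    unfolding exponent by (simp add: powr_diff powr_minus powr_realpow divide_inverse)
  finally have "1 - 2 powr ((1 - \<beta>) * real k) \<le> 1 - 2 ^ k * (1 - 1 / 2 ^ k) ^ m"
    by simp
  also have "\<dots> \<le> 1 - ?P {\<mu>. \<not> bin_vectors k \<subseteq> matrix_columns m k \<mu>}"
    using prob_columns_incomplete_le by simp
  also have "\<dots> = ?P {\<mu>. bin_vectors k \<subseteq> matrix_columns m k \<mu>}"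
    using measure_pmf.prob_compl[where A = "{\<mu>. bin_vectors k \<subseteq> matrix_columns m k \<mu>}"]
    by (simp add: Compl_eq_Diff_UNIV[symmetric] Collect_neg_eq)
  also have "\<dots> \<le> ?P {\<mu>. nondegenerate m k \<mu>}"
    by (rule measure_pmf.finite_measure_mono_AE)
      (auto simp: AE_measure_pmf_iff finite_vector_tuples vector_tuples_nonempty
        nondegenerate_if_all_columns_occur)
  finally show ?thesis .
qed

end
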